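(* Let $\mathcal{A}\subset[\mathbb{N}]^{<\infty}$ be hereditary and compact, let $P\subset\mathbb{N}$ be infinite and $\alpha<\omega_1$. Then $\mathcal{A}$ is $\alpha$-large on $P$ if and only if $\mathrm{CB}(\mathcal{A}\cap[Q]^{<\infty})\ge\alpha+1$ for every infinite $Q\subset P$.
   Context: $[M]^{<\infty}$ = finite subsets of $M$, with the topology of pointwise convergence of characteristic functions. For hereditary compact $\mathcal{A}$: $\mathcal{A}^{(1)}=\{A\in\mathcal{A}:\exists N\subset\mathbb{N}\text{ infinite},\ \forall n\in N\ A\cup\{n\}\in\mathcal{A}\}$, $\mathcal{A}^{(0)}=\mathcal{A}$, $\mathcal{A}^{(\beta+1)}=(\mathcal{A}^{(\beta)})^{(1)}$, $\mathcal{A}^{(\alpha)}=\bigcap_{\beta<\alpha}\mathcal{A}^{(\beta)}$ for limit $\alpha$, and $\mathrm{CB}(\mathcal{A})=\min\{\alpha<\omega_1:\mathcal{A}^{(\alpha)}=\emptyset\}$. Transfinite family: given finite sets $A_n(\alpha)\subset[0,\alpha)$ for each countable limit $\alpha$, increasing in $n$ with $\max A_n(\alpha)\to\alpha$, set $\mathcal{F}_0=\{\emptyset\}$, $\mathcal{F}_{\beta+1}=\{\{n\}\cup E:n\in\mathbb{N},E\in\mathcal{F}_\beta\}\cup\{\emptyset\}$, and for limit $\alpha$, $\mathcal{F}_\alpha=\{\emptyset\}\cup\{E\ne\emptyset:E\in\bigcup_{\beta\in A_{\min E}(\alpha)}\mathcal{F}_\beta\}$. For $N=\{n_1<n_2<\dots\}$,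 $\mathcal{F}^N=\{\{n_i:i\in E\}:E\in\mathcal{F}\}$. $\mathcal{A}$ is $\alpha$-large on $P$ if every infinite $M\subset P$ contains an infinite $N$ with $\mathcal{F}_\alpha^N\subset\mathcal{A}$ (this is independent of the chosen transfinite family). *)

theory Defs
  imports "HOL-Analysis.Analysis" "HOL-Library.Infinite_Set"
begin

text \<open>Countable ordinals: an ordinal alpha < omega_1 is represented as an element x of the
field of a well-order r on a countable set; alpha is the order type of the strict initial
segment below x, and the ordinals beta \<le> alpha are the elements y with (y,x) in r.\<close>

definition ord_less :: "'a rel \<Rightarrow> 'a \<Rightarrow> 'a \<Rightarrow> bool" where
  "ord_less r y z \<longleftrightarrow> (y, z) \<in> r \<and> y \<noteq> z"

definition is_zero :: "'a rel \<Rightarrow> 'a \<Rightarrow> bool" where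
  "is_zero r y \<longleftrightarrow> y \<in> Field r \<and> \<not> (\<exists>z. ord_less r z y)"

definition is_succ_of :: "'a rel \<Rightarrow> 'a \<Rightarrow> 'a \<Rightarrow> bool" where
  "is_succ_of r p y \<longleftrightarrow> ord_less r p y \<and> \<not> (\<exists>z. ord_less r p z \<and> ord_less r z y)"

definition is_limit :: "'a rel \<Rightarrow> 'a \<Rightarrow> bool" where
  "is_limit r y \<longleftrightarrow> y \<in> Field r \<and> (\<exists>z. ord_less r z y) \<and> \<not> (\<exists>p. is_succ_of r p y)"

definition derive1 :: "nat set set \<Rightarrow> nat set set" where
  "derive1 \<A> = {S \<in> \<A>. \<exists>N::nat set. infinite N \<and> (\<forall>n\<in>N. insert n S \<in> \<A>)}"

definition deriv :: "'a rel \<Rightarrow> nat set set \<Rightarrow> 'a \<Rightarrow> nat set set" where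
  "deriv r \<A> = wfrec (r - Id) (\<lambda>f y.
     if is_zero r y then \<A>
     else if (\<exists>p. is_succ_of r p y) then derive1 (f (THE p. is_succ_of r p y))
     else \<Inter> {f z | z. ord_less r z y})"

text \<open>CB(B) \<ge> alpha + 1, where alpha is the ordinal represented by x:
  there is no gamma \<le> alpha with B^(gamma) empty.\<close>

definition CB_ge_succ :: "'a rel \<Rightarrow> 'a \<Rightarrow> nat set set \<Rightarrow> bool" where
  "CB_ge_succ r x \<B> \<longleftrightarrow> (\<forall>y. (y, x) \<in> r \<longrightarrow> deriv r \<B> y \<noteq> {})"

definition hereditary :: "nat set set \<Rightarrow> bool" where
  "hereditary \<A> \<longleftrightarrow> (\<forall>S\<in>\<A>. \<forall>T. T \<subseteq> S \<longrightarrow> T \<in> \<A>)"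

text \<open>Characteristic function; nat \<Rightarrow> real carries the product topology
  (pointwise convergence).\<close>

definition charf :: "nat set \<Rightarrow> (nat \<Rightarrow> real)" where
  "charf S = (\<lambda>n. if n \<in> S then 1 else 0)"

definition compact_family :: "nat set set \<Rightarrow> bool" where
  "compact_family \<A> \<longleftrightarrow> compact (charf ` \<A>)"

definition transfinite_data :: "'a rel \<Rightarrow> ('a \<Rightarrow> nat \<Rightarrow> 'a set) \<Rightarrow> bool" where
  "transfinite_data r Af \<longleftrightarrow> (\<forall>y. is_limit r y \<longrightarrow>
      (\<forall>n. finite (Af y n) \<and> (\<forall>z\<in>Af y n. ord_less r z y) \<and> Af y n \<subseteq> Af y (Suc n)) \<and>
      (\<forall>z. ord_less r z y \<longrightarrow> (\<exists>n0. \<forall>n\<ge>n0. \<exists>w\<in>Af y n. (z, w) \<in> r)))"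

definition famF :: "'a rel \<Rightarrow> ('a \<Rightarrow> nat \<Rightarrow> 'a set) \<Rightarrow> 'a \<Rightarrow> nat set set" where
  "famF r Af = wfrec (r - Id) (\<lambda>f y.
     if is_zero r y then {{}}
     else if (\<exists>p. is_succ_of r p y)
       then {insert n E | n E. E \<in> f (THE p. is_succ_of r p y)} \<union> {{}}
     else {{}} \<union> {E. E \<noteq> {} \<and> (\<exists>z\<in>Af y (Min E). E \<in> f z)})"

text \<open>F^N, with N = {n_0 < n_1 < ...} enumerated from index 0.\<close>

definition famF_on :: "nat set set \<Rightarrow> nat set \<Rightarrow> nat set set" where
  "famF_on \<F> N = (\<lambda>E. enumerate N ` E) ` \<F>"

definition large :: "'a rel \<Rightarrow> ('a \<Rightarrow> nat \<Rightarrow> 'a set) \<Rightarrow> 'a \<Rightarrow> nat set set \<Rightarrow> nat set \<Rightarrow> bool" where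
  "large r Af x \<A> P \<longleftrightarrow> (\<forall>M. M \<subseteq> P \<and> infinite M \<longrightarrow>
      (\<exists>N. N \<subseteq> M \<and> infinite N \<and> famF_on (famF r Af x) N \<subseteq> \<A>))"

end

theory Submission
  imports Defs
begin

(*
  Both directions go by induction along the well-order, for an arbitrary hereditary family B
  in place of A, since the induction passes to links {T. insert n T \<in> B} and traces B \<inter> [Q].

  Forward: {} lies in the y-th derivative of F_y, and the enumeration of N is injective, so it
  carries derivatives of F_y into derivatives of F_y^N. Hence F_x^N \<subseteq> A with N \<subseteq> Q puts {}
  into the x-th derivative of A \<inter> [Q], which for hereditary families means CB(A \<inter> [Q]) \<ge> x + 1.

  Backward: at a successor y = p + 1, an exhaustion argument gives inside every infinite Q some n
  and an infinite Q' \<subseteq> Q on which the link of B at n satisfies the hypothesis for p, so the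
  induction hypothesis places a copy of F_p there. At a limit y, the finitely many F_z with
  z \<in> A_k(y) are placed simultaneously. In both cases a diagonal sequence n_0 < n_1 < ...
  assembles these copies into one of F_y; they fit together because F_y is spreading, i.e.
  closed under moving elements upwards.
*)

lemma enumerate_range_strict_mono:
  fixes f :: "nat \<Rightarrow> nat"
  assumes "strict_mono f"
  shows "enumerate (range f) n = f n"
proof (induction n)
  case 0
  show ?case unfolding enumerate_0
    by (rule Least_equality) (auto simp: strict_mono_less_eq[OF assms])
next
  case (Suc n)
  have inf: "infinite (range f)"
    using range_inj_infinite[OF strict_mono_imp_inj_on[OF assms]] .
  show ?case unfolding enumerate_Suc''[OF inf] Suc.IH
    by (intro Least_equality)
      (auto simp: strict_mono_less[OF assms] strict_mono_less_eq[OF assms] Suc_le_eq)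
qed

lemma enumerate_le_strict_mono:
  fixes g :: "nat \<Rightarrow> nat"
  assumes L: "infinite L" and g: "strict_mono g" "\<And>j. a \<le> j \<Longrightarrow> g j \<in> L"
    and start: "enumerate L a \<le> g a" and "a \<le> j"
  shows "enumerate L j \<le> g j"
  using \<open>a \<le> j\<close>
proof (induction j rule: dec_induct)
  case base
  show ?case by (fact start)
next
  case (step j)
  have "enumerate L (Suc j) = (LEAST s. s \<in> L \<and> enumerate L j < s)"
    using enumerate_Suc''[OF L] .
  also have "\<dots> \<le> g (Suc j)"
    using step g by (intro Least_le) (simp add: strict_mono_less order.strict_trans1)
  finally show ?case .
qed

lemma enumerate_le_enumerate_subset:
  fixes N :: "nat set"
  assumes N': "infinite N'" and "N' \<subseteq> N"
  shows "enumerate N j \<le> enumerate N' j"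
proof (rule enumerate_le_strict_mono)
  show "infinite N" using assms infinite_super by blast
  show "enumerate N 0 \<le> enumerate N' 0"
    unfolding enumerate_0[of N] using enumerate_in_set[OF N'] assms(2) by (blast intro: Least_le)
qed (use N' assms(2) enumerate_in_set strict_mono_enumerate in auto)

lemma nested_sequence_diagonal:
  fixes f :: "nat \<Rightarrow> nat"
  assumes Ls: "\<And>k. infinite (Ls k)" "\<And>k. Ls k \<subseteq> Qs k" and f: "\<And>k. f k \<in> Qs k"
    and Qs_Suc: "\<And>k. Qs (Suc k) = {q \<in> Ls k. f k < q \<and> enumerate (Ls k) (Suc k) \<le> q}"
  shows "strict_mono f" and "k < j \<Longrightarrow> f j \<in> Ls k \<and> enumerate (Ls k) j \<le> f j"
proof -
  show "strict_mono f"
    unfolding strict_mono_Suc_iff using f[of "Suc _"] by (simp add: Qs_Suc)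
  have "decseq Qs"
    unfolding decseq_Suc_iff Qs_Suc using Ls(2) by blast
  then have in_Ls: "f j \<in> Ls k" if "k < j" for k j
    using f[of j] decseqD[of Qs "Suc k" j] that by (auto simp: Qs_Suc)
  assume "k < j"
  have "enumerate (Ls k) j \<le> f j"
  proof (rule enumerate_le_strict_mono[OF Ls(1) \<open>strict_mono f\<close>])
    show "enumerate (Ls k) (Suc k) \<le> f (Suc k)"
      using f[of "Suc k"] by (simp add: Qs_Suc)
  qed (use in_Ls \<open>k < j\<close> in auto)
  then show "f j \<in> Ls k \<and> enumerate (Ls k) j \<le> f j"
    using in_Ls[OF \<open>k < j\<close>] by blast
qed

lemma diagonal_sequence:
  fixes M :: "nat set" and R :: "nat \<Rightarrow> nat \<Rightarrow> nat set \<Rightarrow> bool"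
  assumes "infinite M"
    and step: "\<And>k Q. Q \<subseteq> M \<Longrightarrow> infinite Q \<Longrightarrow> \<exists>n\<in>Q. \<exists>L\<subseteq>Q. infinite L \<and> R k n L"
  obtains f Ls where "strict_mono f" "range f \<subseteq> M" "\<And>k. infinite (Ls k)" "\<And>k. R k (f k) (Ls k)"
    "\<And>k j. k < j \<Longrightarrow> f j \<in> Ls k \<and> enumerate (Ls k) j \<le> f j"
proof -
  have "\<forall>k Q. \<exists>n L. Q \<subseteq> M \<and> infinite Q \<longrightarrow> n \<in> Q \<and> L \<subseteq> Q \<and> infinite L \<and> R k n L"
    using step by blast
  then obtain n L where nL: "\<And>k Q. Q \<subseteq> M \<Longrightarrow> infinite Q \<Longrightarrow>
      n k Q \<in> Q \<and> L k Q \<subseteq> Q \<and> infinite (L k Q) \<and> R k (n k Q) (L k Q)"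
    by metis
  define Qs where "Qs = rec_nat M (\<lambda>k Q. {q \<in> L k Q. n k Q < q \<and> enumerate (L k Q) (Suc k) \<le> q})"
  define f where "f k = n k (Qs k)" for k
  define Ls where "Ls k = L k (Qs k)" for k
  have Qs_Suc: "Qs (Suc k) = {q \<in> Ls k. f k < q \<and> enumerate (Ls k) (Suc k) \<le> q}" for k
    by (simp add: Qs_def f_def Ls_def)
  have Qs: "Qs k \<subseteq> M \<and> infinite (Qs k)" for k
  proof (induction k)
    case 0
    show ?case using assms(1) by (simp add: Qs_def)
  next
    case (Suc k)
    then have "Ls k \<subseteq> M" "infinite (Ls k)"
      using nL[of "Qs k" k] by (auto simp: Ls_def)
    moreover have "Qs (Suc k) = Ls k - {..<max (Suc (f k)) (enumerate (Ls k) (Suc k))}"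
      by (auto simp: Qs_Suc)
    ultimately show ?case
      by auto
  qed
  have f_Ls: "f k \<in> Qs k" "Ls k \<subseteq> Qs k" "infinite (Ls k)" "R k (f k) (Ls k)" for k
    using nL[of "Qs k" k] Qs[of k] by (simp_all add: f_def Ls_def)
  note diagonal = nested_sequence_diagonal[OF f_Ls(3,2,1) Qs_Suc]
  have "range f \<subseteq> M"
    using f_Ls(1) Qs by blast
  then show ?thesis
    using diagonal f_Ls(3,4) by (intro that[of f Ls]) auto
qed

lemma derive1_subset: "derive1 B \<subseteq> B"
  unfolding derive1_def by blast

lemma derive1_mono: "B \<subseteq> C \<Longrightarrow> derive1 B \<subseteq> derive1 C"
  unfolding derive1_def by blast

lemma hereditaryD: "hereditary B \<Longrightarrow> S \<in> B \<Longrightarrow> T \<subseteq> S \<Longrightarrow> T \<in> B"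
  unfolding hereditary_def by blast

lemma hereditary_derive1:
  assumes "hereditary B"
  shows "hereditary (derive1 B)"
  unfolding hereditary_def derive1_def
  using hereditaryD[OF assms] insert_mono by (smt (verit) mem_Collect_eq)

lemma hereditary_Inter: "(\<And>X. X \<in> \<X> \<Longrightarrow> hereditary X) \<Longrightarrow> hereditary (\<Inter> \<X>)"
  unfolding hereditary_def by blast

lemma hereditary_Int_Pow: "hereditary B \<Longrightarrow> hereditary (B \<inter> {S. S \<subseteq> Q})"
  unfolding hereditary_def by blast

definition link :: "nat \<Rightarrow> nat set set \<Rightarrow> nat set set" where
  "link n B = {T. insert n T \<in> B}"

lemma hereditary_link: "hereditary B \<Longrightarrow> hereditary (link n B)"
  unfolding hereditary_def link_def by (metis hereditaryD insert_mono mem_Collect_eq)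

lemma famF_on_range:
  assumes "strict_mono f"
  shows "famF_on F (range f) = image f ` F"
proof -
  have "enumerate (range f) = f"
    using enumerate_range_strict_mono[OF assms] by blast
  then show ?thesis
    unfolding famF_on_def by simp
qed

lemma famF_on_subset_Pow: "infinite N \<Longrightarrow> S \<in> famF_on F N \<Longrightarrow> S \<subseteq> N"
  unfolding famF_on_def using enumerate_in_set by blast

(* For hereditary B: CB(B \<inter> [Q]) \<ge> y + 1 for every infinite Q \<subseteq> M. *)
definition CB_ge_succ_on :: "'a rel \<Rightarrow> 'a \<Rightarrow> nat set set \<Rightarrow> nat set \<Rightarrow> bool" where
  "CB_ge_succ_on r y B M \<longleftrightarrow> (\<forall>Q. Q \<subseteq> M \<and> infinite Q \<longrightarrow> {} \<in> deriv r (B \<inter> {S. S \<subseteq> Q}) y)"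

lemma CB_ge_succ_on_subset: "M' \<subseteq> M \<Longrightarrow> CB_ge_succ_on r y B M \<Longrightarrow> CB_ge_succ_on r y B M'"
  unfolding CB_ge_succ_on_def by blast

lemma in_Diff_Id_iff_ord_less: "(z, y) \<in> r - Id \<longleftrightarrow> ord_less r z y"
  unfolding ord_less_def by auto

lemma ord_less_Field: "ord_less r z y \<Longrightarrow> z \<in> Field r \<and> y \<in> Field r"
  unfolding ord_less_def by (auto simp: Field_def)

lemma is_succ_of_Field: "is_succ_of r p y \<Longrightarrow> p \<in> Field r \<and> y \<in> Field r"
  unfolding is_succ_of_def using ord_less_Field by fast

lemma is_limit_Field: "is_limit r y \<Longrightarrow> y \<in> Field r"
  unfolding is_limit_def by blast

context
  fixes r :: "'a rel"
  assumes wo: "Well_order r"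
begin

lemma wf_ord_less: "wf (r - Id)"
  using wo unfolding well_order_on_def by blast

lemma refl_Field: "y \<in> Field r \<Longrightarrow> (y, y) \<in> r"
  using wo_rel.REFL wo unfolding wo_rel_def refl_on_def by blast

lemma ord_less_total:
  "y \<in> Field r \<Longrightarrow> z \<in> Field r \<Longrightarrow> y \<noteq> z \<Longrightarrow> ord_less r y z \<or> ord_less r z y"
  using wo_rel.TOTALS wo unfolding wo_rel_def ord_less_def by blast

lemma is_succ_of_unique: "is_succ_of r p y \<Longrightarrow> is_succ_of r q y \<Longrightarrow> p = q"
  using ord_less_total ord_less_Field unfolding is_succ_of_def by metis

lemma The_is_succ_of: "is_succ_of r p y \<Longrightarrow> (THE p. is_succ_of r p y) = p"
  by (blast intro: the_equality is_succ_of_unique)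

lemma ordinal_induct [consumes 1, case_names zero succ limit]:
  assumes "y \<in> Field r"
    and zero: "\<And>y. is_zero r y \<Longrightarrow> P y"
    and succ: "\<And>p y. is_succ_of r p y \<Longrightarrow> P p \<Longrightarrow> P y"
    and limit: "\<And>y. is_limit r y \<Longrightarrow> (\<And>z. ord_less r z y \<Longrightarrow> P z) \<Longrightarrow> P y"
  shows "P y"
  using wf_ord_less \<open>y \<in> Field r\<close>
proof (induction y rule: wf_induct_rule)
  case (less y)
  have IH: "P z" if "ord_less r z y" for z
    using less.IH[of z] that ord_less_Field[OF that] in_Diff_Id_iff_ord_less[of z y r] by blast
  consider "is_zero r y" | p where "is_succ_of r p y" | "is_limit r y"
    using less.prems unfolding is_zero_def is_limit_def by blast
  then show ?case
  proof cases
    case 1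
    then show ?thesis by (rule zero)
  next
    case (2 p)
    then show ?thesis using succ IH unfolding is_succ_of_def by blast
  next
    case 3
    then show ?thesis by (rule limit) (rule IH)
  qed
qed

lemma deriv_eq: "deriv r B y =
   (if is_zero r y then B
    else if \<exists>p. is_succ_of r p y then derive1 (cut (deriv r B) (r - Id) y (THE p. is_succ_of r p y))
    else \<Inter> {cut (deriv r B) (r - Id) y z | z. ord_less r z y})"
  unfolding deriv_def by (subst wfrec[OF wf_ord_less]) simp

lemma deriv_zero: "is_zero r y \<Longrightarrow> deriv r B y = B"
  by (simp add: deriv_eq[of _ y])

lemma deriv_succ:
  assumes "is_succ_of r p y"
  shows "deriv r B y = derive1 (deriv r B p)"
proof -
  have "(p, y) \<in> r - Id" "\<not> is_zero r y"
    using assms unfolding is_succ_of_def is_zero_def in_Diff_Id_iff_ord_less by blast+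
  then show ?thesis
    using assms by (subst deriv_eq) (auto simp: The_is_succ_of cut_apply)
qed

lemma deriv_limit:
  assumes "is_limit r y"
  shows "deriv r B y = \<Inter> {deriv r B z | z. ord_less r z y}"
proof -
  have "\<not> is_zero r y" "\<nexists>p. is_succ_of r p y"
    using assms unfolding is_limit_def is_zero_def by blast+
  moreover have
    "{cut (deriv r B) (r - Id) y z | z. ord_less r z y} = {deriv r B z | z. ord_less r z y}"
    unfolding setcompr_eq_image
    by (intro image_cong refl cut_apply) (simp only: in_Diff_Id_iff_ord_less mem_Collect_eq)
  ultimately show ?thesis
    by (subst deriv_eq) simp
qed

lemma deriv_subset: "y \<in> Field r \<Longrightarrow> deriv r B y \<subseteq> B"
proof (induction y rule: ordinal_induct)
  case (zero y)
  then show ?case by (simp add: deriv_zero)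
next
  case (succ p y)
  then show ?case using derive1_subset by (metis deriv_succ order_trans)
next
  case (limit y)
  then obtain z where "ord_less r z y" unfolding is_limit_def by blast
  then show ?case using limit by (auto simp: deriv_limit)
qed

lemma deriv_mono:
  assumes "y \<in> Field r" and "B \<subseteq> C"
  shows "deriv r B y \<subseteq> deriv r C y"
  using assms(1)
proof (induction y rule: ordinal_induct)
  case (zero y)
  then show ?case using assms(2) by (simp add: deriv_zero)
next
  case (succ p y)
  then show ?case by (simp add: deriv_succ derive1_mono)
next
  case (limit y)
  then show ?case by (simp add: deriv_limit) blast
qed

lemma deriv_antimono:
  assumes "w \<in> Field r" and "(y, w) \<in> r"
  shows "deriv r B w \<subseteq> deriv r B y"
  using assms
proof (induction w arbitrary: y rule: ordinal_induct)
  case (zero w)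
  then have "y = w" unfolding is_zero_def ord_less_def by blast
  then show ?case by simp
next
  case (succ p w)
  show ?case
  proof (cases "y = w")
    case False
    then have "ord_less r y w" using succ.prems unfolding ord_less_def by blast
    have "(y, p) \<in> r"
    proof (rule ccontr)
      assume "(y, p) \<notin> r"
      moreover have "y \<in> Field r" "p \<in> Field r"
        using ord_less_Field[OF \<open>ord_less r y w\<close>] is_succ_of_Field[OF succ.hyps] by auto
      ultimately have "ord_less r p y"
        using ord_less_total[of y p] refl_Field unfolding ord_less_def by blast
      then show False
        using succ.hyps \<open>ord_less r y w\<close> unfolding is_succ_of_def by blast
    qed
    then show ?thesis
      using succ.IH derive1_subset by (metis deriv_succ[OF succ.hyps] order_trans)
  qed simp
next
  case (limit w)
  show ?case
  proof (cases "y = w")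
    case False
    then have "ord_less r y w" using limit.prems unfolding ord_less_def by blast
    then show ?thesis by (auto simp: deriv_limit[OF limit.hyps])
  qed simp
qed

lemma hereditary_deriv:
  assumes "y \<in> Field r" and "hereditary B"
  shows "hereditary (deriv r B y)"
  using assms(1)
proof (induction y rule: ordinal_induct)
  case (zero y)
  then show ?case using assms(2) by (simp add: deriv_zero)
next
  case (succ p y)
  then show ?case by (simp add: deriv_succ hereditary_derive1)
next
  case (limit y)
  then show ?case
    unfolding deriv_limit[OF limit.hyps] by (intro hereditary_Inter) blast
qed

lemma insert_in_deriv_image_insert:
  "y \<in> Field r \<Longrightarrow> S \<in> deriv r B y \<Longrightarrow> insert n S \<in> deriv r (insert n ` B) y"
proof (induction y arbitrary: S rule: ordinal_induct)
  case (zero y)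
  then show ?case by (simp add: deriv_zero)
next
  case (succ p y)
  then obtain N where N: "infinite N" "S \<in> deriv r B p" "\<forall>m\<in>N. insert m S \<in> deriv r B p"
    unfolding deriv_succ[OF succ.hyps] derive1_def by blast
  have "\<forall>m\<in>N. insert m (insert n S) \<in> deriv r (insert n ` B) p"
    using N(3) succ.IH by (metis insert_commute)
  then show ?case
    using N(1,2) succ.IH unfolding deriv_succ[OF succ.hyps] derive1_def by blast
next
  case (limit y)
  then show ?case unfolding deriv_limit[OF limit.hyps] by blast
qed

lemma in_deriv_link:
  "y \<in> Field r \<Longrightarrow> insert n S \<in> deriv r B y \<Longrightarrow> S \<in> deriv r (link n B) y"
proof (induction y arbitrary: S rule: ordinal_induct)
  case (zero y)
  then show ?case by (simp add: deriv_zero link_def)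
next
  case (succ p y)
  then obtain N where "infinite N" "insert n S \<in> deriv r B p"
      "\<forall>m\<in>N. insert n (insert m S) \<in> deriv r B p"
    unfolding deriv_succ[OF succ.hyps] derive1_def by (auto simp: insert_commute)
  then show ?case
    using succ.IH unfolding deriv_succ[OF succ.hyps] derive1_def by blast
next
  case (limit y)
  then show ?case unfolding deriv_limit[OF limit.hyps] by blast
qed

lemma image_in_deriv_image:
  assumes "y \<in> Field r" and "inj e"
  shows "S \<in> deriv r B y \<Longrightarrow> e ` S \<in> deriv r (image e ` B) y"
  using assms(1)
proof (induction y arbitrary: S rule: ordinal_induct)
  case (zero y)
  then show ?case by (simp add: deriv_zero)
next
  case (succ p y)
  then obtain N where N: "infinite N" "S \<in> deriv r B p" "\<forall>m\<in>N. insert m S \<in> deriv r B p"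
    unfolding deriv_succ[OF succ.hyps] derive1_def by blast
  have "infinite (e ` N)"
    using N(1) assms(2) by (meson finite_imageD inj_on_subset subset_UNIV)
  moreover have "insert (e k) (e ` S) \<in> deriv r (image e ` B) p" if "k \<in> N" for k
    using succ.IH[of "insert k S"] N(3) that by simp
  ultimately show ?case
    using N(2) succ.IH unfolding deriv_succ[OF succ.hyps] derive1_def by blast
next
  case (limit y)
  then show ?case unfolding deriv_limit[OF limit.hyps] by blast
qed

lemma in_deriv_Int_Pow:
  assumes "y \<in> Field r" and "\<forall>T\<in>B. T \<subseteq> L" and "finite (L - Q)"
  shows "S \<in> deriv r B y \<Longrightarrow> S \<subseteq> Q \<Longrightarrow> S \<in> deriv r (B \<inter> {T. T \<subseteq> Q}) y"
  using assms(1)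
proof (induction y arbitrary: S rule: ordinal_induct)
  case (zero y)
  then show ?case by (simp add: deriv_zero)
next
  case (succ p y)
  then obtain N where N: "infinite N" "S \<in> deriv r B p" "\<forall>m\<in>N. insert m S \<in> deriv r B p"
    unfolding deriv_succ[OF succ.hyps] derive1_def by blast
  have "N \<subseteq> L"
    using N(3) deriv_subset is_succ_of_Field[OF succ.hyps] assms(2) by blast
  then have "finite (N - Q)"
    using assms(3) by (meson Diff_mono finite_subset order_refl)
  then have "infinite (N \<inter> Q)"
    using N(1) by (metis Diff_Diff_Int Diff_empty Diff_subset finite_Diff2 infinite_super)
  moreover have "\<forall>m\<in>N \<inter> Q. insert m S \<in> deriv r (B \<inter> {T. T \<subseteq> Q}) p"
    using N succ by blast
  ultimately show ?case
    using N succ unfolding deriv_succ[OF succ.hyps] derive1_def by blast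
next
  case (limit y)
  then show ?case unfolding deriv_limit[OF limit.hyps] by blast
qed

lemma CB_ge_succ_iff_empty_in_deriv:
  assumes "x \<in> Field r" and "hereditary B"
  shows "CB_ge_succ r x B \<longleftrightarrow> {} \<in> deriv r B x"
proof
  assume "CB_ge_succ r x B"
  then have "deriv r B x \<noteq> {}"
    using refl_Field[OF assms(1)] unfolding CB_ge_succ_def by blast
  then show "{} \<in> deriv r B x"
    using hereditary_deriv[OF assms] hereditaryD by blast
next
  assume "{} \<in> deriv r B x"
  then show "CB_ge_succ r x B"
    unfolding CB_ge_succ_def using deriv_antimono[OF assms(1)] by blast
qed

lemma empty_in_if_CB_ge_succ_on:
  assumes "y \<in> Field r" and "infinite M" and "CB_ge_succ_on r y B M"
  shows "{} \<in> B"
  using assms deriv_subset[OF assms(1), of "B \<inter> {S. S \<subseteq> M}"] unfolding CB_ge_succ_on_def by blast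

lemma CB_ge_succ_on_limit:
  "is_limit r y \<Longrightarrow> ord_less r z y \<Longrightarrow> CB_ge_succ_on r y B M \<Longrightarrow> CB_ge_succ_on r z B M"
  unfolding CB_ge_succ_on_def by (auto simp: deriv_limit)

lemma exists_link_empty_in_deriv:
  assumes succ: "is_succ_of r p y" and "CB_ge_succ_on r y B M" and "L \<subseteq> M" "infinite L"
  shows "\<exists>m\<in>L. {} \<in> deriv r (link m (B \<inter> {S. S \<subseteq> L})) p"
proof -
  have p: "p \<in> Field r"
    using is_succ_of_Field[OF succ] by blast
  have "{} \<in> derive1 (deriv r (B \<inter> {S. S \<subseteq> L}) p)"
    using assms unfolding CB_ge_succ_on_def deriv_succ[OF succ] by blast
  then obtain m where "{m} \<in> deriv r (B \<inter> {S. S \<subseteq> L}) p"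
    unfolding derive1_def by (auto dest: infinite_imp_nonempty)
  moreover have "m \<in> L"
    using calculation deriv_subset[OF p, of "B \<inter> {S. S \<subseteq> L}"] by blast
  ultimately show ?thesis
    using in_deriv_link[OF p, of m "{}"] by auto
qed

lemma exists_link_CB_ge_succ_on:
  assumes p: "p \<in> Field r" and "infinite Q"
    and links: "\<And>L. L \<subseteq> Q \<Longrightarrow> infinite L \<Longrightarrow> \<exists>m\<in>L. {} \<in> deriv r (link m (B \<inter> {S. S \<subseteq> L})) p"
  shows "\<exists>n\<in>Q. \<exists>Q'\<subseteq>Q. infinite Q' \<and> CB_ge_succ_on r p (link n B) Q'"
proof (rule ccontr)
  (* Diagonalise over the failures: no m in the range L of the diagonal sequence can then work,
     because the failure at f i persists on L \<inter> Ls i, which is cofinite in L. *)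
  assume none: "\<not> ?thesis"
  have "\<exists>n\<in>Q'. \<exists>L\<subseteq>Q'. infinite L \<and> {} \<notin> deriv r (link n B \<inter> {S. S \<subseteq> L}) p"
    if "Q' \<subseteq> Q" "infinite Q'" for Q'
  proof -
    obtain n where "n \<in> Q'"
      using infinite_imp_nonempty[OF \<open>infinite Q'\<close>] by blast
    then show ?thesis
      using none that unfolding CB_ge_succ_on_def by blast
  qed
  then obtain f Ls where f: "strict_mono f" "range f \<subseteq> Q" and "\<And>k. infinite (Ls k)"
    and Ls: "\<And>k. {} \<notin> deriv r (link (f k) B \<inter> {S. S \<subseteq> Ls k}) p"
    and diagonal: "\<And>k j. k < j \<Longrightarrow> f j \<in> Ls k \<and> enumerate (Ls k) j \<le> f j"
    using diagonal_sequence[OF \<open>infinite Q\<close>,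
        where R = "\<lambda>k n L. {} \<notin> deriv r (link n B \<inter> {S. S \<subseteq> L}) p"]
    by blast
  have "infinite (range f)"
    using range_inj_infinite[OF strict_mono_imp_inj_on[OF f(1)]] .
  then obtain i where i: "{} \<in> deriv r (link (f i) (B \<inter> {S. S \<subseteq> range f})) p"
    using links[OF f(2)] by blast
  have "range f - Ls i \<subseteq> f ` {..i}"
    using diagonal[of i] by (auto simp: not_le[symmetric])
  then have "finite (range f - Ls i)"
    using finite_subset by blast
  moreover have "\<forall>T\<in>link (f i) (B \<inter> {S. S \<subseteq> range f}). T \<subseteq> range f"
    unfolding link_def by blast
  ultimately have "{} \<in> deriv r (link (f i) (B \<inter> {S. S \<subseteq> range f}) \<inter> {S. S \<subseteq> Ls i}) p"
    using in_deriv_Int_Pow[OF p _ _ i] by simp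
  moreover have "link (f i) (B \<inter> {S. S \<subseteq> range f}) \<inter> {S. S \<subseteq> Ls i} \<subseteq> link (f i) B \<inter> {S. S \<subseteq> Ls i}"
    unfolding link_def by blast
  ultimately show False
    using Ls[of i] deriv_mono[OF p] by blast
qed

context
  fixes Af :: "'a \<Rightarrow> nat \<Rightarrow> 'a set"
  assumes td: "transfinite_data r Af"
begin

lemma Af_less: "is_limit r y \<Longrightarrow> z \<in> Af y n \<Longrightarrow> ord_less r z y"
  using td unfolding transfinite_data_def by blast

lemma Af_mono: "is_limit r y \<Longrightarrow> m \<le> n \<Longrightarrow> Af y m \<subseteq> Af y n"
  using td lift_Suc_mono_le[of "Af y"] unfolding transfinite_data_def by blast

lemma finite_Af: "is_limit r y \<Longrightarrow> finite (Af y n)"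
  using td unfolding transfinite_data_def by blast

lemma Af_cofinal: "is_limit r y \<Longrightarrow> ord_less r z y \<Longrightarrow> \<exists>n. \<exists>w\<in>Af y n. (z, w) \<in> r"
  using td unfolding transfinite_data_def by (meson order_refl)

lemma famF_eq: "famF r Af y =
   (if is_zero r y then {{}}
    else if \<exists>p. is_succ_of r p y
      then {insert n E | n E. E \<in> cut (famF r Af) (r - Id) y (THE p. is_succ_of r p y)} \<union> {{}}
    else {{}} \<union> {E. E \<noteq> {} \<and> (\<exists>z\<in>Af y (Min E). E \<in> cut (famF r Af) (r - Id) y z)})"
  unfolding famF_def by (subst wfrec[OF wf_ord_less]) simp

lemma famF_zero: "is_zero r y \<Longrightarrow> famF r Af y = {{}}"
  by (simp add: famF_eq[of y])

lemma famF_succ: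
  assumes "is_succ_of r p y"
  shows "famF r Af y = {insert n E | n E. E \<in> famF r Af p} \<union> {{}}"
proof -
  have "(p, y) \<in> r - Id" "\<not> is_zero r y"
    using assms unfolding is_succ_of_def is_zero_def in_Diff_Id_iff_ord_less by blast+
  then show ?thesis
    using assms by (subst famF_eq) (auto simp: The_is_succ_of cut_apply)
qed

lemma famF_limit:
  assumes "is_limit r y"
  shows "famF r Af y = {{}} \<union> {E. E \<noteq> {} \<and> (\<exists>z\<in>Af y (Min E). E \<in> famF r Af z)}"
proof -
  have "\<not> is_zero r y" "\<nexists>p. is_succ_of r p y"
    using assms unfolding is_limit_def is_zero_def by blast+
  moreover have "cut (famF r Af) (r - Id) y z = famF r Af z" if "z \<in> Af y n" for z n
    using Af_less[OF assms that] by (simp only: cut_apply flip: in_Diff_Id_iff_ord_less)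
  ultimately show ?thesis
    by (subst famF_eq) simp
qed

lemma in_famF_limit_iff:
  assumes "is_limit r y"
  shows "E \<in> famF r Af y \<longleftrightarrow> E = {} \<or> (\<exists>z\<in>Af y (Min E). E \<in> famF r Af z)"
  unfolding famF_limit[OF assms] by blast

lemma in_famF_succ_iff:
  assumes "is_succ_of r p y"
  shows "E \<in> famF r Af y \<longleftrightarrow> E = {} \<or> (\<exists>n E0. E = insert n E0 \<and> E0 \<in> famF r Af p)"
  unfolding famF_succ[OF assms] by blast

lemma insert_in_famF_succ: "is_succ_of r p y \<Longrightarrow> E \<in> famF r Af p \<Longrightarrow> insert n E \<in> famF r Af y"
  using in_famF_succ_iff by blast

lemma finite_famF: "y \<in> Field r \<Longrightarrow> E \<in> famF r Af y \<Longrightarrow> finite E"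
proof (induction y arbitrary: E rule: ordinal_induct)
  case (zero y)
  then show ?case by (simp add: famF_zero)
next
  case (succ p y)
  then show ?case by (auto simp: famF_succ)
next
  case (limit y)
  then show ?case unfolding famF_limit[OF limit.hyps] using Af_less[OF limit.hyps] by blast
qed

lemma empty_in_famF: "y \<in> Field r \<Longrightarrow> {} \<in> famF r Af y"
  by (induction y rule: ordinal_induct) (simp_all add: famF_zero famF_succ famF_limit)

lemma in_famF_limitI:
  assumes lim: "is_limit r y" and z: "z \<in> Af y k" "E \<in> famF r Af z" and "\<forall>j\<in>E. k \<le> j"
  shows "E \<in> famF r Af y"
proof (cases "E = {}")
  case False
  have "finite E"
    using finite_famF z(2) ord_less_Field[OF Af_less[OF lim z(1)]] by blast
  then have "k \<le> Min E"
    using False assms(4) by simp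
  then show ?thesis
    using Af_mono[OF lim] z in_famF_limit_iff[OF lim, of E] by blast
qed (simp add: in_famF_limit_iff[OF lim])

lemma in_famF_limitE:
  assumes lim: "is_limit r y" and "E \<in> famF r Af y" "E \<noteq> {}"
  obtains z where "ord_less r z y" "z \<in> Af y (Min E)" "E \<in> famF r Af z" "finite E"
proof -
  obtain z where z: "z \<in> Af y (Min E)" "E \<in> famF r Af z"
    using assms in_famF_limit_iff[OF lim, of E] by blast
  moreover have "ord_less r z y"
    using Af_less[OF lim z(1)] .
  moreover have "finite E"
    using finite_famF z(2) ord_less_Field[OF \<open>ord_less r z y\<close>] by blast
  ultimately show ?thesis
    using that by blast
qed

lemma famF_subset_famF_succ:
  assumes "is_succ_of r p y"
  shows "famF r Af p \<subseteq> famF r Af y"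
proof
  fix E
  assume "E \<in> famF r Af p"
  moreover have "E = {} \<or> (\<exists>i. E = insert i E)"
    by blast
  ultimately show "E \<in> famF r Af y"
    unfolding in_famF_succ_iff[OF assms] by blast
qed

lemma hereditary_famF_succ:
  assumes succ: "is_succ_of r p y" and "hereditary (famF r Af p)"
  shows "hereditary (famF r Af y)"
  unfolding hereditary_def
proof (intro ballI allI impI)
  fix E T
  assume "E \<in> famF r Af y" and "T \<subseteq> E"
  show "T \<in> famF r Af y"
  proof (cases "E = {}")
    case False
    then obtain n E0 where E: "E = insert n E0" "E0 \<in> famF r Af p"
      using \<open>E \<in> famF r Af y\<close> in_famF_succ_iff[OF succ] by blast
    have "T - {n} \<in> famF r Af p"
      using hereditaryD[OF assms(2) E(2)] E(1) \<open>T \<subseteq> E\<close> by blast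
    then have "insert n (T - {n}) \<in> famF r Af y" "T - {n} \<in> famF r Af y"
      using insert_in_famF_succ[OF succ] famF_subset_famF_succ[OF succ] by blast+
    then show ?thesis
      by (cases "n \<in> T") (simp_all add: insert_absorb)
  qed (use \<open>T \<subseteq> E\<close> in_famF_succ_iff[OF succ] in blast)
qed

lemma hereditary_famF_limit:
  assumes lim: "is_limit r y" and IH: "\<And>z. ord_less r z y \<Longrightarrow> hereditary (famF r Af z)"
  shows "hereditary (famF r Af y)"
  unfolding hereditary_def
proof (intro ballI allI impI)
  fix E T
  assume "E \<in> famF r Af y" and "T \<subseteq> E"
  show "T \<in> famF r Af y"
  proof (cases "T = {}")
    case False
    then have "E \<noteq> {}"
      using \<open>T \<subseteq> E\<close> by blast
    then obtain z where z: "ord_less r z y" "z \<in> Af y (Min E)" "E \<in> famF r Af z" "finite E"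
      by (rule in_famF_limitE[OF lim \<open>E \<in> famF r Af y\<close>])
    have "T \<in> famF r Af z"
      using hereditaryD[OF IH[OF z(1)] z(3) \<open>T \<subseteq> E\<close>] .
    moreover have "\<forall>j\<in>T. Min E \<le> j"
      using z(4) \<open>T \<subseteq> E\<close> by auto
    ultimately show ?thesis
      by (rule in_famF_limitI[OF lim z(2)])
  qed (simp add: empty_in_famF[OF is_limit_Field[OF lim]])
qed

lemma hereditary_famF: "y \<in> Field r \<Longrightarrow> hereditary (famF r Af y)"
proof (induction y rule: ordinal_induct)
  case (zero y)
  then show ?case by (simp add: famF_zero hereditary_def)
next
  case (succ p y)
  then show ?case by (rule hereditary_famF_succ)
next
  case (limit y)
  then show ?case by (rule hereditary_famF_limit)
qed

lemma image_in_famF: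
  "y \<in> Field r \<Longrightarrow> E \<in> famF r Af y \<Longrightarrow> strict_mono_on E \<phi> \<Longrightarrow> \<forall>j\<in>E. j \<le> \<phi> j \<Longrightarrow>
    \<phi> ` E \<in> famF r Af y"
proof (induction y arbitrary: E rule: ordinal_induct)
  case (zero y)
  then show ?case by (simp add: famF_zero)
next
  case (succ p y)
  show ?case
  proof (cases "E = {}")
    case False
    then obtain n E0 where E: "E = insert n E0" "E0 \<in> famF r Af p"
      using succ.prems(1) in_famF_succ_iff[OF succ.hyps, of E] by blast
    then have "strict_mono_on E0 \<phi>"
      using succ.prems(2) unfolding strict_mono_on_def by blast
    then have "\<phi> ` E0 \<in> famF r Af p"
      using succ.IH[of E0] E succ.prems(3) by blast
    then show ?thesis
      using insert_in_famF_succ[OF succ.hyps] E(1) by simp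
  qed (simp add: in_famF_succ_iff[OF succ.hyps])
next
  case (limit y)
  show ?case
  proof (cases "E = {}")
    case False
    then obtain z where z: "ord_less r z y" "z \<in> Af y (Min E)" "E \<in> famF r Af z" "finite E"
      by (rule in_famF_limitE[OF limit.hyps limit.prems(1)])
    have "\<phi> ` E \<in> famF r Af z"
      using limit.IH[OF z(1) z(3) limit.prems(2,3)] .
    moreover have "\<forall>j\<in>\<phi> ` E. Min E \<le> j"
      using limit.prems(3) Min_le[OF z(4)] by (auto intro: order_trans)
    ultimately show ?thesis
      by (rule in_famF_limitI[OF limit.hyps z(2)])
  qed (simp add: in_famF_limit_iff[OF limit.hyps])
qed

lemma insert_Diff_in_famF:
  "y \<in> Field r \<Longrightarrow> E \<in> famF r Af y \<Longrightarrow> e \<in> E \<Longrightarrow> i \<notin> E \<Longrightarrow> e < i \<Longrightarrow>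
    insert i (E - {e}) \<in> famF r Af y"
proof (induction y arbitrary: E rule: ordinal_induct)
  case (zero y)
  then show ?case by (simp add: famF_zero)
next
  case (succ p y)
  obtain n E0 where E: "E = insert n E0" "E0 \<in> famF r Af p"
    using succ.prems(1,2) in_famF_succ_iff[OF succ.hyps, of E] by blast
  show ?case
  proof (cases "e \<in> E0")
    case True
    then have "insert i (E0 - {e}) \<in> famF r Af p"
      using succ.IH[OF E(2)] succ.prems(3,4) E(1) by blast
    then have "insert n (insert i (E0 - {e})) \<in> famF r Af y"
      by (rule insert_in_famF_succ[OF succ.hyps])
    moreover have "insert i (E - {e}) \<subseteq> insert n (insert i (E0 - {e}))"
      using E(1) by blast
    ultimately show ?thesis
      using hereditaryD[OF hereditary_famF[OF is_succ_of_Field[OF succ.hyps, THEN conjunct2]]]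
      by blast
  next
    case False
    then have "insert i (E - {e}) = insert i E0"
      using E(1) succ.prems(2) by blast
    then show ?thesis
      using insert_in_famF_succ[OF succ.hyps E(2)] by simp
  qed
next
  case (limit y)
  obtain z where z: "ord_less r z y" "z \<in> Af y (Min E)" "E \<in> famF r Af z" "finite E"
    using in_famF_limitE[OF limit.hyps limit.prems(1)] limit.prems(2) by blast
  have "insert i (E - {e}) \<in> famF r Af z"
    using limit.IH[OF z(1) z(3) limit.prems(2-4)] .
  moreover have "\<forall>j\<in>insert i (E - {e}). Min E \<le> j"
    using Min_le[OF z(4)] limit.prems(2,4) by (auto intro: order.strict_implies_order order_trans)
  ultimately show ?case
    by (rule in_famF_limitI[OF limit.hyps z(2)])
qed

lemma famF_succ_Diff_Min:
  assumes succ: "is_succ_of r p y" and T: "T \<in> famF r Af y" "T \<noteq> {}"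
  shows "T - {Min T} \<in> famF r Af p"
proof -
  have p: "p \<in> Field r"
    using is_succ_of_Field[OF succ] by blast
  obtain i E where E: "T = insert i E" "E \<in> famF r Af p"
    using T in_famF_succ_iff[OF succ, of T] by blast
  have "finite E"
    using finite_famF[OF p E(2)] .
  consider "i \<in> E" | "E = {}" | "i \<notin> E" "E \<noteq> {}" "i < Min E" | "i \<notin> E" "E \<noteq> {}" "Min E < i"
    using Min_in[OF \<open>finite E\<close>] by (metis linorder_neqE_nat)
  then show ?thesis
  proof cases
    case 1
    then show ?thesis
      using E hereditary_famF[OF p] hereditaryD by (metis Diff_subset insert_absorb)
  next
    case 2
    then show ?thesis
      using E empty_in_famF[OF p] by simp
  next
    case 3
    then have "T - {Min T} = E"
      using E(1) \<open>finite E\<close> by (simp add: Min_insert)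
    then show ?thesis
      using E(2) by simp
  next
    case 4
    then have "T - {Min T} = insert i (E - {Min E})"
      using E(1) \<open>finite E\<close> by (auto simp: Min_insert)
    then show ?thesis
      using insert_Diff_in_famF[OF p E(2) Min_in[OF \<open>finite E\<close> \<open>E \<noteq> {}\<close>] \<open>i \<notin> E\<close> \<open>Min E < i\<close>]
      by simp
  qed
qed

lemma famF_Int_atLeast_subset:
  assumes "is_limit r y" and "w \<in> Af y n"
  shows "famF r Af w \<inter> {S. S \<subseteq> {n..}} \<subseteq> famF r Af y"
  using in_famF_limitI[OF assms] by auto

lemma empty_in_deriv_famF_succ:
  assumes succ: "is_succ_of r p y" and IH: "{} \<in> deriv r (famF r Af p) p"
  shows "{} \<in> deriv r (famF r Af y) y"
proof -
  have p: "p \<in> Field r" and y: "y \<in> Field r"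
    using is_succ_of_Field[OF succ] by blast+
  have singleton: "{n} \<in> deriv r (famF r Af y) p" for n
  proof -
    have "insert n ` famF r Af p \<subseteq> famF r Af y"
      using insert_in_famF_succ[OF succ] by blast
    then show ?thesis
      using insert_in_deriv_image_insert[OF p IH, of n] deriv_mono[OF p] by blast
  qed
  then have "{} \<in> deriv r (famF r Af y) p"
    using hereditaryD[OF hereditary_deriv[OF p hereditary_famF[OF y]]] by blast
  then show ?thesis
    using singleton unfolding deriv_succ[OF succ] derive1_def by auto
qed

lemma empty_in_deriv_famF: "y \<in> Field r \<Longrightarrow> {} \<in> deriv r (famF r Af y) y"
proof (induction y rule: ordinal_induct)
  case (zero y)
  then show ?case by (simp add: deriv_zero famF_zero)
next
  case (succ p y)
  then show ?case by (rule empty_in_deriv_famF_succ)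
next
  case (limit y)
  have "{} \<in> deriv r (famF r Af y) z" if zy: "ord_less r z y" for z
  proof -
    obtain n w where w: "w \<in> Af y n" "(z, w) \<in> r"
      using Af_cofinal[OF limit.hyps zy] by blast
    have "ord_less r w y"
      using Af_less[OF limit.hyps w(1)] .
    then have "w \<in> Field r" "z \<in> Field r"
      using ord_less_Field[OF \<open>ord_less r w y\<close>] ord_less_Field[OF zy] by simp_all
    then have "{} \<in> deriv r (famF r Af w) z"
      using limit.IH[OF \<open>ord_less r w y\<close>] deriv_antimono[OF _ w(2), of "famF r Af w"] by blast
    moreover have "finite (UNIV - {n..})"
      by (simp add: Compl_eq_Diff_UNIV[symmetric])
    ultimately have "{} \<in> deriv r (famF r Af w \<inter> {S. S \<subseteq> {n..}}) z"
      using in_deriv_Int_Pow[OF \<open>z \<in> Field r\<close>, of "famF r Af w" UNIV "{n..}" "{}"] by simp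
    then show ?thesis
      using deriv_mono[OF \<open>z \<in> Field r\<close> famF_Int_atLeast_subset[OF limit.hyps w(1)]] by blast
  qed
  then show ?case
    unfolding deriv_limit[OF limit.hyps] by blast
qed

lemma empty_in_deriv_if_famF_on_subset:
  assumes "x \<in> Field r" and "infinite N" and "famF_on (famF r Af x) N \<subseteq> B"
  shows "{} \<in> deriv r B x"
proof -
  have "enumerate N ` {} \<in> deriv r (image (enumerate N) ` famF r Af x) x"
    using image_in_deriv_image[OF assms(1) inj_enumerate[OF assms(2)]]
      empty_in_deriv_famF[OF assms(1)] by blast
  then show ?thesis
    using deriv_mono[OF assms(1) assms(3)] unfolding famF_on_def by auto
qed

lemma image_in_famF_on:
  fixes g :: "nat \<Rightarrow> nat"
  assumes y: "y \<in> Field r" and E: "E \<in> famF r Af y" and g: "strict_mono g" and L: "infinite L"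
    and dominated: "\<And>j. j \<in> E \<Longrightarrow> g j \<in> L \<and> enumerate L j \<le> g j"
  shows "g ` E \<in> famF_on (famF r Af y) L"
proof -
  define \<phi> where "\<phi> j = inv (enumerate L) (g j)" for j
  have enumerate_\<phi>: "enumerate L (\<phi> j) = g j" if "j \<in> E" for j
    unfolding \<phi>_def using dominated[OF that] bij_enumerate[OF L]
    by (simp add: bij_betw_inv_into_right)
  have "strict_mono_on E \<phi>"
    unfolding strict_mono_on_def
    using enumerate_\<phi> g L by (metis enumerate_mono_iff strict_mono_less)
  moreover have "\<forall>j\<in>E. j \<le> \<phi> j"
    using enumerate_\<phi> dominated L by (metis enumerate_mono_le_iff)
  ultimately have "\<phi> ` E \<in> famF r Af y"
    using image_in_famF[OF y E] by blast
  moreover have "enumerate L ` \<phi> ` E = g ` E"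
    using enumerate_\<phi> by (auto simp: image_image)
  ultimately show ?thesis
    unfolding famF_on_def by (metis image_eqI)
qed

lemma famF_on_mono:
  assumes y: "y \<in> Field r" and N': "infinite N'" "N' \<subseteq> N"
  shows "famF_on (famF r Af y) N' \<subseteq> famF_on (famF r Af y) N"
proof
  fix S
  assume "S \<in> famF_on (famF r Af y) N'"
  then obtain E where E: "E \<in> famF r Af y" "S = enumerate N' ` E"
    unfolding famF_on_def by blast
  have "infinite N"
    using N' infinite_super by blast
  then show "S \<in> famF_on (famF r Af y) N"
    using image_in_famF_on[OF y E(1) strict_mono_enumerate[OF N'(1)]] E(2)
      enumerate_le_enumerate_subset[OF N'] enumerate_in_set[OF N'(1)] N'(2) by blast
qed

lemma famF_on_succ_subset:
  assumes succ: "is_succ_of r p y" and f: "strict_mono f" and "{} \<in> B"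
    and Ls: "\<And>k. infinite (Ls k)" "\<And>k. famF_on (famF r Af p) (Ls k) \<subseteq> link (f k) B"
    and diagonal: "\<And>k j. k < j \<Longrightarrow> f j \<in> Ls k \<and> enumerate (Ls k) j \<le> f j"
  shows "famF_on (famF r Af y) (range f) \<subseteq> B"
proof
  fix S
  assume "S \<in> famF_on (famF r Af y) (range f)"
  then obtain T where T: "T \<in> famF r Af y" "S = f ` T"
    unfolding famF_on_range[OF f] by blast
  show "S \<in> B"
  proof (cases "T = {}")
    case False
    define k where "k = Min T"
    have p: "p \<in> Field r" and y: "y \<in> Field r"
      using is_succ_of_Field[OF succ] by blast+
    have "finite T"
      using finite_famF[OF y T(1)] .
    then have "k \<in> T" "\<forall>j\<in>T - {k}. k < j"
      using False unfolding k_def by (auto intro: Min_in simp: order.not_eq_order_implies_strict)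
    have "f ` (T - {k}) \<in> famF_on (famF r Af p) (Ls k)"
    proof (rule image_in_famF_on[OF p _ f Ls(1)])
      show "T - {k} \<in> famF r Af p"
        using famF_succ_Diff_Min[OF succ T(1) False] unfolding k_def .
    qed (use diagonal \<open>\<forall>j\<in>T - {k}. k < j\<close> in blast)
    then have "insert (f k) (f ` (T - {k})) \<in> B"
      using Ls(2)[of k] unfolding link_def by blast
    moreover have "insert (f k) (f ` (T - {k})) = S"
      using T(2) \<open>k \<in> T\<close> by blast
    ultimately show ?thesis
      by simp
  qed (use T \<open>{} \<in> B\<close> in simp)
qed

lemma famF_on_limit_subset:
  assumes lim: "is_limit r y" and f: "strict_mono f" and "{} \<in> B"
    and Ls: "\<And>k. infinite (Ls k)" "\<And>k z. z \<in> Af y k \<Longrightarrow> famF_on (famF r Af z) (Ls k) \<subseteq> B"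
    and diagonal: "\<And>k j. k \<le> j \<Longrightarrow> f j \<in> Ls k \<and> enumerate (Ls k) j \<le> f j"
  shows "famF_on (famF r Af y) (range f) \<subseteq> B"
proof
  fix S
  assume "S \<in> famF_on (famF r Af y) (range f)"
  then obtain T where T: "T \<in> famF r Af y" "S = f ` T"
    unfolding famF_on_range[OF f] by blast
  show "S \<in> B"
  proof (cases "T = {}")
    case False
    obtain z where z: "ord_less r z y" "z \<in> Af y (Min T)" "T \<in> famF r Af z" "finite T"
      by (rule in_famF_limitE[OF lim T(1) False])
    have "z \<in> Field r"
      using ord_less_Field[OF z(1)] by blast
    moreover have "f j \<in> Ls (Min T) \<and> enumerate (Ls (Min T)) j \<le> f j" if "j \<in> T" for j
      using diagonal Min_le[OF z(4) that] by blast
    ultimately have "f ` T \<in> famF_on (famF r Af z) (Ls (Min T))"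
      using image_in_famF_on[OF _ z(3) f Ls(1)] by blast
    then show ?thesis
      using Ls(2)[OF z(2)] T(2) by blast
  qed (use T \<open>{} \<in> B\<close> in simp)
qed

lemma ex_famF_on_subset_Ball:
  "finite Z \<Longrightarrow> Z \<subseteq> Field r \<Longrightarrow>
    (\<And>z Q. z \<in> Z \<Longrightarrow> Q \<subseteq> M \<Longrightarrow> infinite Q \<Longrightarrow> \<exists>N\<subseteq>Q. infinite N \<and> famF_on (famF r Af z) N \<subseteq> B) \<Longrightarrow>
    Q \<subseteq> M \<Longrightarrow> infinite Q \<Longrightarrow> \<exists>N\<subseteq>Q. infinite N \<and> (\<forall>z\<in>Z. famF_on (famF r Af z) N \<subseteq> B)"
proof (induction Z arbitrary: Q rule: finite_induct)
  case empty
  then show ?case by blast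
next
  case (insert z Z)
  obtain N1 where N1: "N1 \<subseteq> Q" "infinite N1" "\<forall>z\<in>Z. famF_on (famF r Af z) N1 \<subseteq> B"
    using insert.IH insert.prems by (metis insert_subset insertCI)
  obtain N2 where N2: "N2 \<subseteq> N1" "infinite N2" "famF_on (famF r Af z) N2 \<subseteq> B"
    using insert.prems(2)[of z N1] N1 \<open>Q \<subseteq> M\<close> by blast
  have "\<forall>z'\<in>Z. famF_on (famF r Af z') N2 \<subseteq> B"
    using famF_on_mono[OF _ N2(2,1)] N1(3) insert.prems(1) by blast
  then show ?case
    using N1(1) N2 by blast
qed

lemma famF_on_subset_succ_step:
  assumes succ: "is_succ_of r p y"
    and IH: "\<And>C M. hereditary C \<Longrightarrow> infinite M \<Longrightarrow> CB_ge_succ_on r p C M \<Longrightarrow>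
      \<exists>N\<subseteq>M. infinite N \<and> famF_on (famF r Af p) N \<subseteq> C"
    and B: "hereditary B" and M: "infinite M" "CB_ge_succ_on r y B M"
  shows "\<exists>N\<subseteq>M. infinite N \<and> famF_on (famF r Af y) N \<subseteq> B"
proof -
  have p: "p \<in> Field r" and y: "y \<in> Field r"
    using is_succ_of_Field[OF succ] by blast+
  have "\<exists>n\<in>Q. \<exists>L\<subseteq>Q. infinite L \<and> famF_on (famF r Af p) L \<subseteq> link n B"
    if Q: "Q \<subseteq> M" "infinite Q" for Q
  proof -
    obtain n Q' where n: "n \<in> Q" "Q' \<subseteq> Q" "infinite Q'" "CB_ge_succ_on r p (link n B) Q'"
      using exists_link_CB_ge_succ_on[OF p Q(2)] exists_link_empty_in_deriv[OF succ M(2)] Q(1)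
      by (meson order_trans)
    then obtain L where "L \<subseteq> Q'" "infinite L" "famF_on (famF r Af p) L \<subseteq> link n B"
      using IH[OF hereditary_link[OF B]] by blast
    then show ?thesis
      using n by blast
  qed
  then obtain f Ls where f: "strict_mono f" "range f \<subseteq> M" and Ls: "\<And>k. infinite (Ls k)"
    "\<And>k. famF_on (famF r Af p) (Ls k) \<subseteq> link (f k) B"
    and diagonal: "\<And>k j. k < j \<Longrightarrow> f j \<in> Ls k \<and> enumerate (Ls k) j \<le> f j"
    using diagonal_sequence[OF M(1), where R = "\<lambda>k n L. famF_on (famF r Af p) L \<subseteq> link n B"]
    by blast
  have "infinite (range f)"
    using range_inj_infinite[OF strict_mono_imp_inj_on[OF f(1)]] .
  moreover have "famF_on (famF r Af y) (range f) \<subseteq> B"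
    using famF_on_succ_subset[OF succ f(1) empty_in_if_CB_ge_succ_on[OF y M] Ls diagonal] .
  ultimately show ?thesis
    using f(2) by blast
qed

lemma famF_on_subset_limit_step:
  assumes lim: "is_limit r y"
    and IH: "\<And>z C M. ord_less r z y \<Longrightarrow> hereditary C \<Longrightarrow> infinite M \<Longrightarrow> CB_ge_succ_on r z C M \<Longrightarrow>
      \<exists>N\<subseteq>M. infinite N \<and> famF_on (famF r Af z) N \<subseteq> C"
    and B: "hereditary B" and M: "infinite M" "CB_ge_succ_on r y B M"
  shows "\<exists>N\<subseteq>M. infinite N \<and> famF_on (famF r Af y) N \<subseteq> B"
proof -
  have y: "y \<in> Field r"
    using is_limit_Field[OF lim] .
  have Af_Field: "Af y k \<subseteq> Field r" for k
    using ord_less_Field[OF Af_less[OF lim]] by blast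
  have below: "\<exists>N\<subseteq>Q. infinite N \<and> famF_on (famF r Af z) N \<subseteq> B"
    if "z \<in> Af y k" "Q \<subseteq> M" "infinite Q" for z k Q
  proof (rule IH[OF Af_less[OF lim that(1)] B that(3)])
    show "CB_ge_succ_on r z B Q"
      using CB_ge_succ_on_limit[OF lim Af_less[OF lim that(1)] M(2)]
      by (rule CB_ge_succ_on_subset[OF that(2)])
  qed
  have step: "\<exists>n\<in>Q. \<exists>L\<subseteq>Q. infinite L \<and>
      n \<in> L \<and> enumerate L k \<le> n \<and> (\<forall>z\<in>Af y k. famF_on (famF r Af z) L \<subseteq> B)"
    if Q: "Q \<subseteq> M" "infinite Q" for k Q
  proof -
    obtain L where L: "L \<subseteq> Q" "infinite L" "\<forall>z\<in>Af y k. famF_on (famF r Af z) L \<subseteq> B"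
      using ex_famF_on_subset_Ball[OF finite_Af[OF lim] Af_Field below[of _ k] Q] by blast
    then show ?thesis
      using enumerate_in_set[OF L(2), of k] by blast
  qed
  obtain f Ls where f: "strict_mono f" "range f \<subseteq> M" and Ls: "\<And>k. infinite (Ls k)"
    and here: "\<And>k. f k \<in> Ls k \<and> enumerate (Ls k) k \<le> f k \<and>
      (\<forall>z\<in>Af y k. famF_on (famF r Af z) (Ls k) \<subseteq> B)"
    and diagonal: "\<And>k j. k < j \<Longrightarrow> f j \<in> Ls k \<and> enumerate (Ls k) j \<le> f j"
    using diagonal_sequence[where R = "\<lambda>k n L. n \<in> L \<and> enumerate L k \<le> n \<and>
      (\<forall>z\<in>Af y k. famF_on (famF r Af z) L \<subseteq> B)", OF M(1) step] by blast
  have "famF_on (famF r Af z) (Ls k) \<subseteq> B" if "z \<in> Af y k" for k z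
    using here that by blast
  moreover have "f j \<in> Ls k \<and> enumerate (Ls k) j \<le> f j" if "k \<le> j" for k j
    using here diagonal that by (cases "k = j") auto
  ultimately have "famF_on (famF r Af y) (range f) \<subseteq> B"
    by (rule famF_on_limit_subset[OF lim f(1) empty_in_if_CB_ge_succ_on[OF y M] Ls])
  moreover have "infinite (range f)"
    using range_inj_infinite[OF strict_mono_imp_inj_on[OF f(1)]] .
  ultimately show ?thesis
    using f(2) by blast
qed

lemma famF_on_subset_if_CB_ge_succ_on:
  "y \<in> Field r \<Longrightarrow> hereditary B \<Longrightarrow> infinite M \<Longrightarrow> CB_ge_succ_on r y B M \<Longrightarrow>
    \<exists>N\<subseteq>M. infinite N \<and> famF_on (famF r Af y) N \<subseteq> B"
proof (induction y arbitrary: B M rule: ordinal_induct)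
  case (zero y)
  then have "{} \<in> B"
    using empty_in_if_CB_ge_succ_on[of y M B] unfolding is_zero_def by blast
  then have "famF_on (famF r Af y) M \<subseteq> B"
    by (simp add: famF_zero[OF zero.hyps] famF_on_def)
  then show ?case
    using zero.prems(2) by blast
next
  case (succ p y)
  then show ?case
    using famF_on_subset_succ_step[OF succ.hyps] by blast
next
  case (limit y)
  then show ?case
    using famF_on_subset_limit_step[OF limit.hyps] by blast
qed

lemma CB_ge_succ_if_large:
  assumes "x \<in> Field r" and "hereditary A" and "large r Af x A P" and "Q \<subseteq> P" "infinite Q"
  shows "CB_ge_succ r x (A \<inter> {S. S \<subseteq> Q})"
proof -
  obtain N where N: "N \<subseteq> Q" "infinite N" "famF_on (famF r Af x) N \<subseteq> A"
    using assms(3-5) unfolding large_def by auto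
  then have "famF_on (famF r Af x) N \<subseteq> A \<inter> {S. S \<subseteq> Q}"
    using famF_on_subset_Pow[OF N(2)] by blast
  then show ?thesis
    using empty_in_deriv_if_famF_on_subset[OF assms(1) N(2)]
      CB_ge_succ_iff_empty_in_deriv[OF assms(1) hereditary_Int_Pow[OF assms(2)]] by blast
qed

lemma large_if_CB_ge_succ:
  assumes "x \<in> Field r" and "hereditary A"
    and "\<forall>Q. Q \<subseteq> P \<and> infinite Q \<longrightarrow> CB_ge_succ r x (A \<inter> {S. S \<subseteq> Q})"
  shows "large r Af x A P"
proof -
  have "CB_ge_succ_on r x A M" if "M \<subseteq> P" for M
    using assms(3) that CB_ge_succ_iff_empty_in_deriv[OF assms(1) hereditary_Int_Pow[OF assms(2)]]
    unfolding CB_ge_succ_on_def by blast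
  then show ?thesis
    unfolding large_def using famF_on_subset_if_CB_ge_succ_on[OF assms(1,2)] by blast
qed

end

end

theorem corollary5p6:
  fixes r :: "'a rel" and x :: 'a and Af :: "'a \<Rightarrow> nat \<Rightarrow> 'a set"
    and \<A> :: "nat set set" and P :: "nat set"
  assumes "Well_order r" and "countable (Field r)" and "x \<in> Field r"
    and "transfinite_data r Af"
    and "\<forall>S\<in>\<A>. finite S" and "hereditary \<A>" and "compact_family \<A>"
    and "infinite P"
  shows "large r Af x \<A> P \<longleftrightarrow>
           (\<forall>Q. Q \<subseteq> P \<and> infinite Q \<longrightarrow> CB_ge_succ r x (\<A> \<inter> {S. S \<subseteq> Q}))"
  using CB_ge_succ_if_large[OF assms(1,4,3,6)] large_if_CB_ge_succ[OF assms(1,4,3,6)] by blast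

end
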